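(* For the family of plane curves $y^3+3r(x)y^2-3p(x)y+2q(x)=0$ parametrised by triples $(p,q,r)$ of univariate polynomials, the cuspidal component of the discriminant is the zero set of the resultant of $p(x)+r(x)^2$ and $2q(x)-r(x)^3$ with respect to $x$. Moreover, if $$p(x)=\sum_{i=0}^d\lambda_ix^i,\quad q(x)=x^n+\sum_{i=0}^{n-1}\xi_ix^i,\quad r(x)=\sum_{i=0}^{\lfloor n/3\rfloor}\zeta_ix^i,$$ then the equation of the cuspidal component, considered as a polynomial in the variable $\lambda_0$, is of degree $n$ with coprime coefficients.
   Context: The cuspidal component of the discriminant is the set of parameters $(p,q,r)$ for which the projection $(x,y)\mapsto x$ restricted to the curve has a degenerate critical point, i.e. there is a common zero of $f$, $\partial_yf$, $\partial_y^2f$ where $f=y^3+3r(x)y^2-3p(x)y+2q(x)$. The coefficients of the polynomial in $\lambda_0$ are polynomials in the remaining parameters $\lambda_i\ (i\ge1),\xi_i,\zeta_i$. *)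

theory Defs
  imports Complex_Main "HOL-Library.Poly_Mapping" "HOL-Computational_Algebra.Polynomial"
    "Subresultants.Resultant_Prelim"
begin

text \<open>Cuspidal locus: the curve y^3 + 3 r(x) y^2 - 3 p(x) y + 2 q(x) = 0 has a point where
  f, its first and its second partial derivative in y vanish simultaneously.\<close>
definition cuspidal :: "complex poly \<Rightarrow> complex poly \<Rightarrow> complex poly \<Rightarrow> bool" where
  "cuspidal p q r \<longleftrightarrow> (\<exists>x y :: complex.
      y^3 + 3 * poly r x * y^2 - 3 * poly p x * y + 2 * poly q x = 0 \<and>
      3 * y^2 + 6 * poly r x * y - 3 * poly p x = 0 \<and>
      6 * y + 6 * poly r x = 0)"

text \<open>Parameters: Lam i is lambda_i (used for i \<ge> 1; lambda_0 is the distinguished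
  polynomial variable), Xi i is xi_i, Zeta i is zeta_i.\<close>
datatype param = Lam nat | Xi nat | Zeta nat

text \<open>Multivariate polynomials over C in the parameters other than lambda_0.\<close>
type_synonym mpoly = "(param \<Rightarrow>\<^sub>0 nat) \<Rightarrow>\<^sub>0 complex"

definition pvar :: "param \<Rightarrow> mpoly" where
  "pvar v = Poly_Mapping.single (Poly_Mapping.single v 1) 1"

text \<open>Generic polynomials in x (outer poly) whose coefficients are polynomials in lambda_0
  (inner poly) with coefficients in the remaining parameters.\<close>
definition gen_p :: "nat \<Rightarrow> mpoly poly poly" where
  "gen_p d = [:[:0, 1:]:] + (\<Sum>i\<in>{1..d}. monom [:pvar (Lam i):] i)"

definition gen_q :: "nat \<Rightarrow> mpoly poly poly" where
  "gen_q n = monom 1 n + (\<Sum>i<n. monom [:pvar (Xi i):] i)"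

definition gen_r :: "nat \<Rightarrow> mpoly poly poly" where
  "gen_r n = (\<Sum>i\<le>n div 3. monom [:pvar (Zeta i):] i)"

definition cusp_equation :: "nat \<Rightarrow> nat \<Rightarrow> mpoly poly" where
  "cusp_equation d n = resultant (gen_p d + (gen_r n)^2) (2 * gen_q n - (gen_r n)^3)"

end

theory Submission
  imports Defs "Subresultants.Subresultant_Gcd"
    "HOL-Computational_Algebra.Fundamental_Theorem_Algebra"
    "HOL-Computational_Algebra.Field_as_Ring"
    "HOL-Library.Countable"
begin

text \<open>
  Eliminating y with f_yy = 0, i.e. y = -r(x), turns f_y = 0 and f = 0 into p + r^2 = 0 and
  2 q - r^3 = 0; over the complex numbers these have a common root iff their resultant vanishes.

  Write p + r^2 = lambda_0 + P(x) and Q = 2 q - r^3. In the Sylvester matrix of Q and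
  lambda_0 + P the variable lambda_0 occurs only on the diagonal of deg Q = n rows, so the
  resultant has degree n in lambda_0 with leading coefficient +-L^m, where L = lead_coeff Q is 2,
  or 2 - zeta_k^3 if n = 3 k. A common divisor h of all coefficients divides L^m; a grading argument
  shows that h is then a polynomial in zeta_k alone, so unless h is a unit it vanishes whenever
  zeta_k is a cube root w of 2. But a suitable specialisation with zeta_k = w turns Q into 1
  and hence the resultant into a nonzero power of the leading coefficient of lambda_0 + P.
\<close>

lemma cuspidal_iff_common_root:
  "cuspidal p q r \<longleftrightarrow> (\<exists>x. poly (p + r^2) x = 0 \<and> poly (2 * q - r^3) x = 0)"
proof -
  have "(y^3 + 3 * b * y^2 - 3 * a * y + 2 * c = 0 \<and> 3 * y^2 + 6 * b * y - 3 * a = 0 \<and> 6 * y + 6 * b = 0)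
    \<longleftrightarrow> y = - b \<and> a + b^2 = 0 \<and> 2 * c - b^3 = 0" for a b c y :: complex
  proof (cases "y = - b")
    case True
    have e1: "y^3 + 3 * b * y^2 - 3 * a * y + 2 * c = (2 * c - b^3) + 3 * b * (a + b^2)"
      and e2: "3 * y^2 + 6 * b * y - 3 * a = - 3 * (a + b^2)"
      unfolding True by (simp_all add: algebra_simps power2_eq_square power3_eq_cube)
    have "6 * y + 6 * b = 0" using True by simp
    moreover have "3 * y^2 + 6 * b * y - 3 * a = 0 \<longleftrightarrow> a + b^2 = 0"
      by (simp only: e2 mult_eq_0_iff) simp
    moreover have "y^3 + 3 * b * y^2 - 3 * a * y + 2 * c = 0 \<longleftrightarrow> 2 * c - b^3 = 0"
      if "a + b^2 = 0" unfolding e1 that by simp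
    ultimately show ?thesis using True by blast
  next
    case False
    then have "y + b \<noteq> 0" by (simp add: eq_neg_iff_add_eq_0)
    then have "6 * y + 6 * b \<noteq> 0" by (metis distrib_left mult_eq_0_iff zero_neq_numeral)
    then show ?thesis using False by blast
  qed
  then show ?thesis unfolding cuspidal_def by auto
qed

lemma common_root_iff_resultant_eq_0:
  fixes F G :: "complex poly"
  shows "(\<exists>x. poly F x = 0 \<and> poly G x = 0) \<longleftrightarrow> resultant F G = 0 \<or> (F = 0 \<and> G = 0)"
proof (cases "F = 0 \<and> G = 0")
  case False
  then have "gcd F G \<noteq> 0" by auto
  have "(\<exists>x. poly F x = 0 \<and> poly G x = 0) \<longleftrightarrow> (\<exists>x. poly (gcd F G) x = 0)"
    by (simp add: poly_eq_0_iff_dvd)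
  also have "\<dots> \<longleftrightarrow> degree (gcd F G) \<noteq> 0"
    using alg_closed_imp_poly_has_root \<open>gcd F G \<noteq> 0\<close>
    by (metis degree_eq_zeroE gr0I pCons_0_0 poly_const_conv)
  also have "\<dots> \<longleftrightarrow> resultant F G = 0" by (simp add: resultant_0_gcd)
  finally show ?thesis using False by blast
qed auto

definition monomial_eval :: "('v \<Rightarrow> 'b::comm_semiring_1) \<Rightarrow> ('v \<Rightarrow>\<^sub>0 nat) \<Rightarrow> 'b" where
  "monomial_eval a m = (\<Prod>v \<in> Poly_Mapping.keys m. a v ^ Poly_Mapping.lookup m v)"

definition mpoly_eval ::
  "('a::zero \<Rightarrow> 'b::comm_semiring_1) \<Rightarrow> ('v \<Rightarrow> 'b) \<Rightarrow> (('v \<Rightarrow>\<^sub>0 nat) \<Rightarrow>\<^sub>0 'a) \<Rightarrow> 'b" where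
  "mpoly_eval \<phi> a f = (\<Sum>m \<in> Poly_Mapping.keys f. \<phi> (Poly_Mapping.lookup f m) * monomial_eval a m)"

definition mpoly_const :: "'a::zero \<Rightarrow> ('v \<Rightarrow>\<^sub>0 nat) \<Rightarrow>\<^sub>0 'a" where
  "mpoly_const c = Poly_Mapping.single 0 c"

definition mpoly_var :: "'v \<Rightarrow> ('v \<Rightarrow>\<^sub>0 nat) \<Rightarrow>\<^sub>0 'a::{zero,one}" where
  "mpoly_var v = Poly_Mapping.single (Poly_Mapping.single v 1) 1"

lemma pvar_eq_mpoly_var: "pvar = mpoly_var"
  by (simp add: fun_eq_iff pvar_def mpoly_var_def)

lemma sum_single_lookup: "(\<Sum>m \<in> Poly_Mapping.keys f. Poly_Mapping.single m (Poly_Mapping.lookup f m)) = f"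
  by (rule poly_mapping_eqI) (simp add: lookup_sum lookup_single when_def in_keys_iff)

lemma monomial_eval_superset:
  assumes "finite S" "Poly_Mapping.keys m \<subseteq> S"
  shows "monomial_eval a m = (\<Prod>v \<in> S. a v ^ Poly_Mapping.lookup m v)"
  unfolding monomial_eval_def
  by (rule prod.mono_neutral_left) (use assms in \<open>auto simp: in_keys_iff\<close>)

lemma monomial_eval_0 [simp]: "monomial_eval a 0 = 1"
  by (simp add: monomial_eval_def)

lemma monomial_eval_single [simp]: "monomial_eval a (Poly_Mapping.single v k) = a v ^ k"
  by (cases "k = 0") (simp_all add: monomial_eval_def)

lemma monomial_eval_add: "monomial_eval a (m + m') = monomial_eval a m * monomial_eval a m'"
proof -
  let ?S = "Poly_Mapping.keys m \<union> Poly_Mapping.keys m'"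
  have "monomial_eval a (m + m') = (\<Prod>v \<in> ?S. a v ^ Poly_Mapping.lookup (m + m') v)"
    by (rule monomial_eval_superset) (use keys_add[of m m'] in auto)
  also have "\<dots> = (\<Prod>v \<in> ?S. a v ^ Poly_Mapping.lookup m v) * (\<Prod>v \<in> ?S. a v ^ Poly_Mapping.lookup m' v)"
    by (simp add: lookup_add power_add prod.distrib)
  also have "\<dots> = monomial_eval a m * monomial_eval a m'"
    by (subst (1 2) monomial_eval_superset[of ?S]) auto
  finally show ?thesis .
qed

lemma mpoly_eval_0 [simp]: "mpoly_eval \<phi> a 0 = 0"
  by (simp add: mpoly_eval_def)

context
  fixes \<phi> :: "'a::comm_ring_1 \<Rightarrow> 'b::comm_ring_1"
  assumes hom: "comm_ring_hom \<phi>"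
begin

interpretation \<phi>: comm_ring_hom \<phi> by (rule hom)

lemma mpoly_eval_superset:
  assumes "finite S" "Poly_Mapping.keys f \<subseteq> S"
  shows "mpoly_eval \<phi> a f = (\<Sum>m \<in> S. \<phi> (Poly_Mapping.lookup f m) * monomial_eval a m)"
  unfolding mpoly_eval_def
  by (rule sum.mono_neutral_left) (use assms in \<open>auto simp: in_keys_iff\<close>)

lemma mpoly_eval_add: "mpoly_eval \<phi> a (f + g) = mpoly_eval \<phi> a f + mpoly_eval \<phi> a g"
proof -
  let ?S = "Poly_Mapping.keys f \<union> Poly_Mapping.keys g"
  have "mpoly_eval \<phi> a (f + g) = (\<Sum>m \<in> ?S. \<phi> (Poly_Mapping.lookup (f + g) m) * monomial_eval a m)"
    by (rule mpoly_eval_superset) (use keys_add[of f g] in auto)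
  also have "\<dots> = (\<Sum>m \<in> ?S. \<phi> (Poly_Mapping.lookup f m) * monomial_eval a m)
      + (\<Sum>m \<in> ?S. \<phi> (Poly_Mapping.lookup g m) * monomial_eval a m)"
    by (simp add: lookup_add \<phi>.hom_add distrib_right sum.distrib)
  also have "\<dots> = mpoly_eval \<phi> a f + mpoly_eval \<phi> a g"
    by (subst (1 2) mpoly_eval_superset[of ?S]) auto
  finally show ?thesis .
qed

lemma mpoly_eval_sum: "mpoly_eval \<phi> a (sum F S) = (\<Sum>s \<in> S. mpoly_eval \<phi> a (F s))"
  by (induct S rule: infinite_finite_induct) (simp_all add: mpoly_eval_add)

lemma mpoly_eval_single [simp]:
  "mpoly_eval \<phi> a (Poly_Mapping.single m c) = \<phi> c * monomial_eval a m"
  by (cases "c = 0") (simp_all add: mpoly_eval_def)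

lemma mpoly_eval_mult: "mpoly_eval \<phi> a (f * g) = mpoly_eval \<phi> a f * mpoly_eval \<phi> a g"
proof -
  have "f * g = (\<Sum>m \<in> Poly_Mapping.keys f. \<Sum>m' \<in> Poly_Mapping.keys g.
      Poly_Mapping.single (m + m') (Poly_Mapping.lookup f m * Poly_Mapping.lookup g m'))"
    by (subst (1 2) sum_single_lookup[symmetric]) (simp add: sum_product mult_single)
  then have "mpoly_eval \<phi> a (f * g) = (\<Sum>m \<in> Poly_Mapping.keys f. \<Sum>m' \<in> Poly_Mapping.keys g.
      \<phi> (Poly_Mapping.lookup f m) * monomial_eval a m * (\<phi> (Poly_Mapping.lookup g m') * monomial_eval a m'))"
    by (simp add: mpoly_eval_sum monomial_eval_add \<phi>.hom_mult mult_ac)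
  then show ?thesis by (simp add: mpoly_eval_def sum_product)
qed

lemma comm_ring_hom_mpoly_eval: "comm_ring_hom (mpoly_eval \<phi> a)"
proof
  have "(1 :: ('v \<Rightarrow>\<^sub>0 nat) \<Rightarrow>\<^sub>0 'a) = Poly_Mapping.single 0 1" by simp
  then show "mpoly_eval \<phi> a 1 = 1" by (metis mpoly_eval_single monomial_eval_0 \<phi>.hom_one mult_1)
qed (simp_all add: mpoly_eval_add mpoly_eval_mult)

lemma mpoly_eval_const [simp]: "mpoly_eval \<phi> a (mpoly_const c) = \<phi> c"
  by (simp add: mpoly_const_def)

lemma mpoly_eval_var [simp]: "mpoly_eval \<phi> a (mpoly_var v) = a v"
  by (simp add: mpoly_var_def)

lemma comm_ring_hom_mpoly_eval_comp:
  assumes "comm_ring_hom g"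
  shows "g (mpoly_eval \<phi> a f) = mpoly_eval (g \<circ> \<phi>) (g \<circ> a) f"
proof -
  interpret g: comm_ring_hom g by (rule assms)
  show ?thesis
    by (simp add: mpoly_eval_def monomial_eval_def g.hom_sum g.hom_mult g.hom_prod g.hom_power)
qed

end

lemma comm_ring_hom_mpoly_const: "comm_ring_hom (mpoly_const :: 'a::comm_ring_1 \<Rightarrow> ('v \<Rightarrow>\<^sub>0 nat) \<Rightarrow>\<^sub>0 'a)"
  by unfold_locales (simp_all add: mpoly_const_def single_add mult_single)

lemma mpoly_eval_const_var:
  fixes f :: "('v \<Rightarrow>\<^sub>0 nat) \<Rightarrow>\<^sub>0 'a::comm_ring_1"
  shows "mpoly_eval mpoly_const mpoly_var f = f"
proof -
  have "monomial_eval mpoly_var m = (Poly_Mapping.single m 1 :: ('v \<Rightarrow>\<^sub>0 nat) \<Rightarrow>\<^sub>0 'a)"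
    for m :: "'v \<Rightarrow>\<^sub>0 nat"
  proof -
    have "mpoly_var v ^ k = (Poly_Mapping.single (Poly_Mapping.single v k) 1 :: ('v \<Rightarrow>\<^sub>0 nat) \<Rightarrow>\<^sub>0 'a)"
      for v k by (induct k) (simp_all add: mpoly_var_def mult_single flip: single_add)
    then have "monomial_eval mpoly_var m = (\<Prod>v \<in> Poly_Mapping.keys m.
        Poly_Mapping.single (Poly_Mapping.single v (Poly_Mapping.lookup m v)) (1::'a))"
      by (simp add: monomial_eval_def)
    also have "\<dots> = Poly_Mapping.single (\<Sum>v \<in> Poly_Mapping.keys m. Poly_Mapping.single v (Poly_Mapping.lookup m v)) 1"
      by (induct rule: infinite_finite_induct) (simp_all add: mult_single)
    finally show ?thesis by (simp add: sum_single_lookup)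
  qed
  then show ?thesis
    by (simp add: mpoly_eval_def mpoly_const_def mult_single sum_single_lookup)
qed

lemma mpoly_const_dvd_1:
  assumes "c \<noteq> 0"
  shows "mpoly_const (c::'a::field) dvd (1 :: ('v \<Rightarrow>\<^sub>0 nat) \<Rightarrow>\<^sub>0 'a)"
proof
  show "1 = mpoly_const c * mpoly_const (1 / c)"
    using assms by (simp add: mpoly_const_def mult_single)
qed

lemma coeff_mult_at_degree_bounds:
  fixes p q :: "'a::comm_semiring_1 poly"
  assumes "degree p \<le> a" "degree q \<le> b"
  shows "coeff (p * q) (a + b) = coeff p a * coeff q b"
proof -
  have "coeff p i * coeff q (a + b - i) = (if i = a then coeff p a * coeff q b else 0)" for i
  proof (cases i a rule: linorder_cases)
    case less
    then have "degree q < a + b - i" using assms(2) by linarith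
    then show ?thesis using less by (simp add: coeff_eq_0)
  next
    case greater
    then show ?thesis using assms(1) by (simp add: coeff_eq_0)
  qed simp
  then show ?thesis by (simp add: coeff_mult)
qed

lemma coeff_prod_at_degree_bounds:
  fixes f :: "'b \<Rightarrow> 'a::comm_semiring_1 poly"
  assumes "finite I" "\<And>i. i \<in> I \<Longrightarrow> degree (f i) \<le> e i"
  shows "degree (\<Prod>i\<in>I. f i) \<le> (\<Sum>i\<in>I. e i) \<and>
    coeff (\<Prod>i\<in>I. f i) (\<Sum>i\<in>I. e i) = (\<Prod>i\<in>I. coeff (f i) (e i))"
  using assms
proof (induct I rule: finite_induct)
  case (insert x F)
  then have "degree (\<Prod>i\<in>F. f i) \<le> (\<Sum>i\<in>F. e i)" "degree (f x) \<le> e x" by auto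
  with insert show ?case
    by (auto simp: coeff_mult_at_degree_bounds intro: order.trans[OF degree_mult_le] add_mono)
qed simp

lemma coeff_of_int_mult: "coeff (of_int z * p) k = of_int z * coeff (p :: 'a::comm_ring_1 poly) k"
  by (simp add: of_int_poly)

lemma det_poly_row_degree_bounds:
  fixes M :: "'a::comm_ring_1 poly mat"
  assumes M: "M \<in> carrier_mat N N"
    and deg: "\<And>i j. i < N \<Longrightarrow> j < N \<Longrightarrow> degree (M $$ (i,j)) \<le> e i"
  shows "degree (det M) \<le> (\<Sum>i<N. e i)"
    and "coeff (det M) (\<Sum>i<N. e i) = det (mat N N (\<lambda>(i,j). coeff (M $$ (i,j)) (e i)))"
proof -
  let ?P = "{p. p permutes {0..<N}}"
  have E: "(\<Sum>i<N. e i) = (\<Sum>i = 0..<N. e i)" by (simp add: lessThan_atLeast0)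
  have prod: "degree (\<Prod>i = 0..<N. M $$ (i, p i)) \<le> (\<Sum>i<N. e i) \<and>
     coeff (\<Prod>i = 0..<N. M $$ (i, p i)) (\<Sum>i<N. e i) = (\<Prod>i = 0..<N. coeff (M $$ (i, p i)) (e i))"
    if "p \<in> ?P" for p
    unfolding E using that by (intro coeff_prod_at_degree_bounds) (auto intro: deg simp: permutes_in_image)
  have det: "det M = (\<Sum>p \<in> ?P. signof p * (\<Prod>i = 0..<N. M $$ (i, p i)))"
    by (rule det_def'[OF M])
  show "degree (det M) \<le> (\<Sum>i<N. e i)"
    unfolding det
  proof (rule degree_sum_le)
    fix p assume "p \<in> ?P"
    then show "degree (signof p * (\<Prod>i = 0..<N. M $$ (i, p i))) \<le> (\<Sum>i<N. e i)"
      using prod[of p] by (metis (no_types, lifting) add_0 degree_mult_le degree_of_int order.trans)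
  qed (simp add: finite_permutations)
  have "coeff (det M) (\<Sum>i<N. e i) = (\<Sum>p \<in> ?P. signof p * (\<Prod>i = 0..<N. coeff (M $$ (i, p i)) (e i)))"
    unfolding det coeff_sum coeff_of_int_mult using prod by (intro sum.cong) auto
  also have "\<dots> = det (mat N N (\<lambda>(i,j). coeff (M $$ (i,j)) (e i)))"
    by (subst det_def'[of _ N]) (auto intro!: sum.cong prod.cong simp: permutes_in_image)
  finally show "coeff (det M) (\<Sum>i<N. e i) = det (mat N N (\<lambda>(i,j). coeff (M $$ (i,j)) (e i)))" .
qed

lemma det_sylvester_mat_sub_1:
  "det (sylvester_mat_sub m n p (1 :: 'a::comm_ring_1 poly)) = coeff p m ^ n"
proof -
  let ?S = "sylvester_mat_sub m n p (1 :: 'a poly)"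
  have S: "?S $$ (i,j) = (if i < n then if i \<le> j \<and> j - i \<le> m then coeff p (m + i - j) else 0
      else if i = j then 1 else 0)" if "i < m + n" "j < m + n" for i j
    using that by (auto simp: sylvester_mat_sub_index coeff_1)
  have "upper_triangular ?S"
    by (rule upper_triangularI) (simp add: S)
  then have "det ?S = (\<Prod>i = 0..<m + n. ?S $$ (i,i))"
    by (simp add: det_upper_triangular[OF _ sylvester_mat_sub_carrier] prod_list_diag_prod)
  also have "\<dots> = (\<Prod>i = 0..<m + n. if i < n then coeff p m else 1)"
    by (rule prod.cong) (simp_all add: S)
  also have "\<dots> = (\<Prod>i = 0..<n. coeff p m)"
    by (rule prod.mono_neutral_cong_right) auto
  finally show ?thesis by simp
qed

lemma (in comm_ring_hom) resultant_map_poly_right_eq_1: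
  assumes "map_poly hom q = 1"
  shows "hom (resultant p q) = coeff (map_poly hom p) (degree p) ^ degree q"
proof -
  have "hom (resultant p q) = det (sylvester_mat_sub (degree p) (degree q) (map_poly hom p) 1)"
    unfolding resultant_def sylvester_mat_def hom_det[symmetric] sylvester_mat_sub_map[of hom, OF hom_zero] assms ..
  then show ?thesis by (simp add: det_sylvester_mat_sub_1)
qed

abbreviation const_coeffs :: "'a::zero poly \<Rightarrow> 'a poly poly" where
  "const_coeffs p \<equiv> map_poly (\<lambda>a. [:a:]) p"

lemma coeff_var_plus_const_coeffs:
  "coeff ([:[:0, 1:]:] + const_coeffs A) k = [:coeff A k:] + (if k = 0 then [:0, 1:] else 0)"
  by (cases k) (simp_all add: coeff_map_poly)

lemma degree_const_coeffs [simp]: "degree (const_coeffs A) = degree A"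
  by (rule degree_map_poly) simp

lemma degree_var_plus_const_coeffs:
  "degree ([:[:0, 1:]:] + const_coeffs (A :: 'a::comm_ring_1 poly)) = degree A"
proof (cases "degree A = 0")
  case True
  then show ?thesis using degree_add_le[of "[:[:0, 1:]:]" 0 "const_coeffs A"] by simp
qed (simp add: degree_add_eq_right)

lemma lead_coeff_var_plus_const_coeffs:
  "lead_coeff ([:[:0, 1:]:] + const_coeffs (A :: 'a::comm_ring_1 poly))
    = [:lead_coeff A:] + (if degree A = 0 then [:0, 1:] else 0)"
  by (simp only: degree_var_plus_const_coeffs coeff_var_plus_const_coeffs)

lemma resultant_var_plus_const_coeffs:
  fixes A B :: "'a::comm_ring_1 poly"
  defines "R \<equiv> resultant ([:[:0, 1:]:] + const_coeffs A) (const_coeffs B)"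
  shows "degree R \<le> degree B"
    and "coeff R (degree B) = (-1)^(degree A * degree B) * lead_coeff B ^ degree A"
proof -
  define P where "P = [:[:0, 1:]:] + const_coeffs A"
  let ?m = "degree A" and ?n = "degree B"
  let ?S = "sylvester_mat_sub ?n ?m (const_coeffs B) P"
  define e where "e i = (if i < ?m then 0 else 1::nat)" for i
  have cP: "coeff P k = [:coeff A k:] + (if k = 0 then [:0, 1:] else 0)" for k
    unfolding P_def by (rule coeff_var_plus_const_coeffs)
  have dP: "degree P = ?m"
    unfolding P_def by (rule degree_var_plus_const_coeffs)
  have sign: "(-1)^k * p = smult ((-1)^k) p" for k and p :: "'a poly"
    by (induct k) simp_all
  have "R = (-1)^(?m * ?n) * resultant (const_coeffs B) P"
    unfolding R_def P_def[symmetric]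
    by (rule resultant_swap[of P "const_coeffs B", unfolded dP degree_const_coeffs])
  also have "resultant (const_coeffs B) P = det ?S"
    unfolding resultant_def sylvester_mat_def dP degree_const_coeffs ..
  finally have R: "R = smult ((-1)^(?m * ?n)) (det ?S)"
    by (simp only: sign)
  have deg: "degree (?S $$ (i,j)) \<le> e i" if "i < ?n + ?m" "j < ?n + ?m" for i j
    using that by (auto simp: sylvester_mat_sub_index coeff_map_poly cP
        e_def intro: order.trans[OF degree_add_le])
  have top: "mat (?n + ?m) (?n + ?m) (\<lambda>(i,j). coeff (?S $$ (i,j)) (e i)) = sylvester_mat_sub ?n ?m B 1"
    by (rule eq_matI) (auto simp: sylvester_mat_sub_index coeff_map_poly cP
        e_def coeff_1 coeff_pCons split: nat.split)
  have "(\<Sum>i<?n + ?m. e i) = (\<Sum>i\<in>{?m..<?n + ?m}. 1)"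
    by (rule sum.mono_neutral_cong_right) (auto simp: e_def)
  then have esum: "(\<Sum>i<?n + ?m. e i) = ?n" by simp
  have "degree (det ?S) \<le> ?n"
    using det_poly_row_degree_bounds(1)[OF sylvester_mat_sub_carrier deg] unfolding esum .
  then show "degree R \<le> ?n"
    unfolding R by (rule order.trans[OF degree_smult_le])
  have "coeff (det ?S) ?n = lead_coeff B ^ ?m"
    using det_poly_row_degree_bounds(2)[OF sylvester_mat_sub_carrier deg]
    unfolding esum top det_sylvester_mat_sub_1 .
  then show "coeff R ?n = (-1)^(?m * ?n) * lead_coeff B ^ ?m"
    unfolding R coeff_smult by simp
qed

instance param :: countable
  by countable_datatype

text \<open>The order is arbitrary: it is only needed for the integral domain instance of mpoly.\<close>
instantiation param :: linorder
begin

definition less_eq_param :: "param \<Rightarrow> param \<Rightarrow> bool" where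
  "(x::param) \<le> y \<longleftrightarrow> to_nat x \<le> to_nat y"

definition less_param :: "param \<Rightarrow> param \<Rightarrow> bool" where
  "(x::param) < y \<longleftrightarrow> to_nat x < to_nat y"

instance
  by standard (auto simp: less_eq_param_def less_param_def)

end

lemma comm_ring_hom_const_poly: "comm_ring_hom (\<lambda>a::'a::comm_ring_1. [:a:])"
  by unfold_locales simp_all

interpretation mpoly_const: map_poly_comm_ring_hom
  "mpoly_const :: 'a::comm_ring_1 \<Rightarrow> ('v \<Rightarrow>\<^sub>0 nat) \<Rightarrow>\<^sub>0 'a"
  by (rule map_poly_comm_ring_hom.intro, rule comm_ring_hom_mpoly_const)

definition poly_zeta :: "nat \<Rightarrow> complex poly \<Rightarrow> mpoly" where
  "poly_zeta k H = poly (map_poly mpoly_const H) (pvar (Zeta k))"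

definition zeta_part :: "nat \<Rightarrow> mpoly \<Rightarrow> complex poly" where
  "zeta_part k = mpoly_eval (\<lambda>c. [:c:]) (\<lambda>v. if v = Zeta k then [:0, 1:] else 0)"

text \<open>Substituting t v for every parameter v other than zeta_k makes the t-degree the degree in
  those parameters, so a factor of a polynomial in zeta_k alone is constant in t.\<close>
definition scale_nonzeta :: "nat \<Rightarrow> mpoly \<Rightarrow> mpoly poly" where
  "scale_nonzeta k = mpoly_eval (\<lambda>c. [:mpoly_const c:]) (\<lambda>v. if v = Zeta k then [:pvar (Zeta k):] else [:0, pvar v:])"

lemma comm_ring_hom_poly_zeta: "comm_ring_hom (poly_zeta k)"
  by unfold_locales (simp_all add: poly_zeta_def mpoly_const.hom_add mpoly_const.hom_mult)

lemma poly_zeta_const: "poly_zeta k [:c:] = mpoly_const c"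
  by (simp add: poly_zeta_def mpoly_const.base.map_poly_pCons_hom)

lemma poly_zeta_var: "poly_zeta k [:0, 1:] = pvar (Zeta k)"
  by (simp add: poly_zeta_def mpoly_const.base.map_poly_pCons_hom)

lemma comm_ring_hom_zeta_part: "comm_ring_hom (zeta_part k)"
  unfolding zeta_part_def by (rule comm_ring_hom_mpoly_eval[OF comm_ring_hom_const_poly])

lemma comm_ring_hom_const_poly_mpoly_const:
  "comm_ring_hom (\<lambda>c::'a::comm_ring_1. [:mpoly_const c:] :: (('v \<Rightarrow>\<^sub>0 nat) \<Rightarrow>\<^sub>0 'a) poly)"
  by unfold_locales (simp_all add: mpoly_const.base.hom_add mpoly_const.base.hom_mult)

lemma comm_ring_hom_scale_nonzeta: "comm_ring_hom (scale_nonzeta k)"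
  unfolding scale_nonzeta_def by (rule comm_ring_hom_mpoly_eval[OF comm_ring_hom_const_poly_mpoly_const])

lemma zeta_part_poly_zeta [simp]: "zeta_part k (poly_zeta k H) = H"
proof -
  interpret zeta_part: comm_ring_hom "zeta_part k" by (rule comm_ring_hom_zeta_part)
  have "zeta_part k (poly_zeta k H) = poly (map_poly (zeta_part k \<circ> mpoly_const) H) (zeta_part k (pvar (Zeta k)))"
    unfolding poly_zeta_def zeta_part.poly_map_poly[symmetric] by (simp add: map_poly_map_poly)
  also have "\<dots> = pcompose H [:0, 1:]"
    by (simp add: pcompose_altdef o_def zeta_part_def pvar_eq_mpoly_var comm_ring_hom_const_poly)
  finally show ?thesis by (simp only: pcompose_idR)
qed

lemma scale_nonzeta_poly_zeta: "scale_nonzeta k (poly_zeta k H) = [:poly_zeta k H:]"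
proof -
  interpret scale: comm_ring_hom "scale_nonzeta k" by (rule comm_ring_hom_scale_nonzeta)
  have const_poly: "poly (map_poly (\<lambda>a. [:a:]) p) [:x:] = [:poly p x:]" for p :: "mpoly poly" and x
    by (induct p) (simp_all add: map_poly_pCons)
  have "scale_nonzeta k \<circ> mpoly_const = (\<lambda>a. [:a:]) \<circ> mpoly_const"
    and "scale_nonzeta k (pvar (Zeta k)) = [:pvar (Zeta k):]"
    by (simp_all add: fun_eq_iff scale_nonzeta_def pvar_eq_mpoly_var comm_ring_hom_const_poly_mpoly_const)
  then show ?thesis
    unfolding poly_zeta_def scale.poly_map_poly[symmetric] const_poly[symmetric]
    by (simp add: map_poly_map_poly)
qed

lemma poly_scale_nonzeta_1: "poly (scale_nonzeta k f) 1 = f"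
proof -
  have "(\<lambda>v. poly (if v = Zeta k then [:pvar (Zeta k):] else [:0, pvar v:]) 1) = mpoly_var"
    by (auto simp: fun_eq_iff pvar_eq_mpoly_var)
  then have "poly (scale_nonzeta k f) 1 = mpoly_eval mpoly_const mpoly_var f"
    unfolding scale_nonzeta_def
    by (subst comm_ring_hom_mpoly_eval_comp[OF _ poly_hom.comm_ring_hom_axioms])
      (simp_all add: o_def pvar_eq_mpoly_var comm_ring_hom_const_poly_mpoly_const)
  then show ?thesis by (simp add: mpoly_eval_const_var)
qed

lemma poly_scale_nonzeta_0: "poly (scale_nonzeta k f) 0 = poly_zeta k (zeta_part k f)"
proof -
  interpret poly_zeta: comm_ring_hom "poly_zeta k" by (rule comm_ring_hom_poly_zeta)
  let ?a = "\<lambda>v. if v = Zeta k then pvar (Zeta k) else 0"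
  have "(\<lambda>v. poly (if v = Zeta k then [:pvar (Zeta k):] else [:0, pvar v:]) 0) = ?a"
    by (auto simp: fun_eq_iff)
  then have "poly (scale_nonzeta k f) 0 = mpoly_eval mpoly_const ?a f"
    unfolding scale_nonzeta_def
    by (subst comm_ring_hom_mpoly_eval_comp[OF _ poly_hom.comm_ring_hom_axioms])
      (simp_all add: o_def comm_ring_hom_const_poly_mpoly_const)
  moreover have "(\<lambda>v. poly_zeta k (if v = Zeta k then [:0, 1:] else 0)) = ?a"
    using poly_zeta.hom_zero poly_zeta_var[simplified] by (auto simp: fun_eq_iff)
  then have "poly_zeta k (zeta_part k f) = mpoly_eval mpoly_const ?a f"
    unfolding zeta_part_def
    by (subst comm_ring_hom_mpoly_eval_comp[OF _ comm_ring_hom_poly_zeta])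
      (simp_all add: o_def poly_zeta_const comm_ring_hom_const_poly)
  ultimately show ?thesis by simp
qed

lemma comm_ring_hom_id: "comm_ring_hom (id :: 'a::comm_ring_1 \<Rightarrow> 'a)"
  by unfold_locales simp_all

lemma mpoly_eval_poly_zeta: "mpoly_eval id a (poly_zeta k H) = poly H (a (Zeta k))"
proof -
  interpret eval: comm_ring_hom "mpoly_eval id a"
    by (rule comm_ring_hom_mpoly_eval[OF comm_ring_hom_id])
  show ?thesis
    unfolding poly_zeta_def eval.poly_map_poly[symmetric]
    by (simp add: map_poly_map_poly o_def comm_ring_hom_id pvar_eq_mpoly_var)
qed

lemma dvd_poly_zeta_imp_eq_poly_zeta:
  assumes "poly_zeta k G \<noteq> 0" and "h dvd poly_zeta k G"
  shows "h = poly_zeta k (zeta_part k h)"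
proof -
  interpret scale: comm_ring_hom "scale_nonzeta k" by (rule comm_ring_hom_scale_nonzeta)
  obtain g where "poly_zeta k G = h * g" using assms(2) by (rule dvdE)
  then have prod: "scale_nonzeta k h * scale_nonzeta k g = [:poly_zeta k G:]"
    by (metis scale.hom_mult scale_nonzeta_poly_zeta)
  then have "scale_nonzeta k h \<noteq> 0" "scale_nonzeta k g \<noteq> 0" using assms(1) by auto
  then have "degree (scale_nonzeta k h) + degree (scale_nonzeta k g) = 0"
    using prod by (metis degree_mult_eq degree_pCons_0)
  then obtain c where "scale_nonzeta k h = [:c:]" by (metis add_is_0 degree_eq_zeroE)
  then have "poly (scale_nonzeta k h) 1 = poly (scale_nonzeta k h) 0" by simp
  then show ?thesis by (simp only: poly_scale_nonzeta_1 poly_scale_nonzeta_0)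
qed

lemma dvd_poly_zeta_cases:
  assumes "G \<noteq> 0" and "h dvd poly_zeta k G"
  shows "h dvd 1 \<or> (\<exists>w. poly G w = 0 \<and> (\<forall>a. a (Zeta k) = w \<longrightarrow> mpoly_eval id a h = 0))"
proof -
  interpret zeta_part: comm_ring_hom "zeta_part k" by (rule comm_ring_hom_zeta_part)
  define H where "H = zeta_part k h"
  have "poly_zeta k G \<noteq> 0" using assms(1) zeta_part_poly_zeta[of k G] by force
  then have h: "h = poly_zeta k H" unfolding H_def using assms(2) by (rule dvd_poly_zeta_imp_eq_poly_zeta)
  have "H dvd G" unfolding H_def using zeta_part.hom_dvd[OF assms(2)] by simp
  show ?thesis
  proof (cases "degree H = 0")
    case True
    then obtain c where c: "H = [:c:]" by (rule degree_eq_zeroE)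
    with \<open>H dvd G\<close> assms(1) have "c \<noteq> 0" by auto
    moreover have "h = mpoly_const c" using h c by (simp add: poly_zeta_const)
    ultimately show ?thesis by (simp add: mpoly_const_dvd_1)
  next
    case False
    then obtain w where "poly H w = 0" using alg_closed_imp_poly_has_root by blast
    then have "poly G w = 0" using \<open>H dvd G\<close> by (metis dvdE mult_zero_left poly_mult)
    moreover have "mpoly_eval id a h = 0" if "a (Zeta k) = w" for a
      using h that \<open>poly H w = 0\<close> by (simp add: mpoly_eval_poly_zeta)
    ultimately show ?thesis by blast
  qed
qed

lemma poly_zeta_eq_0_iff [simp]: "poly_zeta k H = 0 \<longleftrightarrow> H = 0"
proof -
  interpret zeta_part: comm_ring_hom "zeta_part k" by (rule comm_ring_hom_zeta_part)
  interpret poly_zeta: comm_ring_hom "poly_zeta k" by (rule comm_ring_hom_poly_zeta)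
  show ?thesis by (metis zeta_part_poly_zeta zeta_part.hom_zero poly_zeta.hom_zero)
qed

lemma poly_zeta_monom: "poly_zeta k (monom c i) = mpoly_const c * pvar (Zeta k) ^ i"
  by (simp add: poly_zeta_def poly_monom)

definition p_nonconst :: "nat \<Rightarrow> mpoly poly" where
  "p_nonconst d = (\<Sum>i\<in>{1..d}. monom (pvar (Lam i)) i)"

definition q_generic :: "nat \<Rightarrow> mpoly poly" where
  "q_generic n = monom 1 n + (\<Sum>i<n. monom (pvar (Xi i)) i)"

definition r_generic :: "nat \<Rightarrow> mpoly poly" where
  "r_generic n = (\<Sum>i\<le>n div 3. monom (pvar (Zeta i)) i)"

definition cusp_P :: "nat \<Rightarrow> nat \<Rightarrow> mpoly poly" where
  "cusp_P d n = p_nonconst d + r_generic n ^ 2"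

definition cusp_Q :: "nat \<Rightarrow> mpoly poly" where
  "cusp_Q n = 2 * q_generic n - r_generic n ^ 3"

lemma cusp_equation_eq_resultant:
  "cusp_equation d n = resultant ([:[:0, 1:]:] + const_coeffs (cusp_P d n)) (const_coeffs (cusp_Q n))"
proof -
  interpret const_poly: map_poly_comm_ring_hom "\<lambda>a::mpoly. [:a:]"
    by (rule map_poly_comm_ring_hom.intro, rule comm_ring_hom_const_poly)
  have "gen_p d = [:[:0, 1:]:] + const_coeffs (p_nonconst d)"
    and "gen_q n = const_coeffs (q_generic n)" and "gen_r n = const_coeffs (r_generic n)"
    by (simp_all add: gen_p_def gen_q_def gen_r_def p_nonconst_def q_generic_def r_generic_def
        const_poly.hom_sum const_poly.hom_add map_poly_monom)
  then show ?thesis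
    by (simp add: cusp_equation_def cusp_P_def cusp_Q_def const_poly.hom_add const_poly.hom_mult
        const_poly.hom_power const_poly.hom_minus const_poly.hom_numeral add.assoc)
qed

lemma coeff_p_nonconst: "coeff (p_nonconst d) i = (if 1 \<le> i \<and> i \<le> d then pvar (Lam i) else 0)"
  unfolding p_nonconst_def coeff_sum coeff_monom by (auto simp: sum.delta)

lemma coeff_q_generic: "coeff (q_generic n) i = (if i = n then 1 else if i < n then pvar (Xi i) else 0)"
  unfolding q_generic_def coeff_add coeff_sum coeff_monom by (auto simp: sum.delta)

lemma coeff_r_generic: "coeff (r_generic n) i = (if i \<le> n div 3 then pvar (Zeta i) else 0)"
  unfolding r_generic_def coeff_sum coeff_monom by (auto simp: sum.delta)

lemma degree_p_nonconst: "degree (p_nonconst d) \<le> d"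
  by (rule degree_le) (simp add: coeff_p_nonconst)

lemma degree_q_generic: "degree (q_generic n) \<le> n"
  by (rule degree_le) (simp add: coeff_q_generic)

lemma degree_r_generic: "degree (r_generic n) \<le> n div 3"
  by (rule degree_le) (simp add: coeff_r_generic)

lemma coeff_r_generic_cube:
  "coeff (r_generic n ^ 3) n = (if 3 dvd n then pvar (Zeta (n div 3)) ^ 3 else 0)"
proof (cases "3 dvd n")
  case True
  define k where "k = n div 3"
  have n: "n = k + k + k" using True unfolding k_def by auto
  have r: "degree (r_generic n) \<le> k" using degree_r_generic unfolding k_def .
  then have rr: "degree (r_generic n * r_generic n) \<le> k + k"
    by (intro order.trans[OF degree_mult_le] add_mono)
  have "coeff (r_generic n ^ 3) n = coeff (r_generic n * r_generic n * r_generic n) (k + k + k)"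
    by (simp add: n power3_eq_cube)
  also have "\<dots> = coeff (r_generic n) k ^ 3"
    by (simp add: coeff_mult_at_degree_bounds[OF rr r] coeff_mult_at_degree_bounds[OF r r] power3_eq_cube)
  finally show ?thesis using True by (simp add: coeff_r_generic k_def)
next
  case False
  have "degree (r_generic n ^ 3) \<le> n div 3 * 3"
    by (rule order.trans[OF degree_power_le]) (use degree_r_generic in auto)
  also have "\<dots> < n" using False by (metis div_times_less_eq_dividend dvd_triv_right le_neq_implies_less)
  finally show ?thesis using False by (simp add: coeff_eq_0)
qed

definition cusp_Q_lead :: "nat \<Rightarrow> complex poly" where
  "cusp_Q_lead n = 2 - (if 3 dvd n then monom 1 3 else 0)"

lemma cusp_Q_lead_nonzero: "cusp_Q_lead n \<noteq> 0"
proof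
  assume "cusp_Q_lead n = 0"
  then have "coeff (cusp_Q_lead n) 0 = 0" by simp
  then show False by (simp add: cusp_Q_lead_def coeff_monom numeral_poly split: if_splits)
qed

lemma degree_cusp_Q: "degree (cusp_Q n) = n"
  and lead_coeff_cusp_Q: "lead_coeff (cusp_Q n) = poly_zeta (n div 3) (cusp_Q_lead n)"
proof -
  interpret poly_zeta: comm_ring_hom "poly_zeta (n div 3)" by (rule comm_ring_hom_poly_zeta)
  have "degree (2 * q_generic n) \<le> n"
    using degree_q_generic[of n] by (simp add: numeral_poly)
  moreover have "degree (r_generic n ^ 3) \<le> n"
    by (rule order.trans[OF degree_power_le]) (use degree_r_generic[of n] in auto)
  ultimately have le: "degree (cusp_Q n) \<le> n"
    unfolding cusp_Q_def by (rule degree_diff_le)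
  have "coeff (2 * q_generic n) n = 2"
    by (simp add: numeral_poly coeff_q_generic)
  moreover have "poly_zeta (n div 3) (cusp_Q_lead n) = 2 - (if 3 dvd n then pvar (Zeta (n div 3)) ^ 3 else 0)"
    by (simp add: cusp_Q_lead_def poly_zeta.hom_minus poly_zeta.hom_numeral poly_zeta_monom
        mpoly_const.base.hom_one)
  ultimately have c: "coeff (cusp_Q n) n = poly_zeta (n div 3) (cusp_Q_lead n)"
    by (simp add: cusp_Q_def coeff_r_generic_cube)
  then have "coeff (cusp_Q n) n \<noteq> 0" by (simp add: cusp_Q_lead_nonzero)
  then show "degree (cusp_Q n) = n" using le by (simp add: le_antisym le_degree)
  with c show "lead_coeff (cusp_Q n) = poly_zeta (n div 3) (cusp_Q_lead n)" by simp
qed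

lemma degree_cusp_equation: "degree (cusp_equation d n) = n"
  and coeff_cusp_equation: "coeff (cusp_equation d n) n = poly_zeta (n div 3)
      ((-1)^(degree (cusp_P d n) * n) * cusp_Q_lead n ^ degree (cusp_P d n))"
proof -
  interpret poly_zeta: comm_ring_hom "poly_zeta (n div 3)" by (rule comm_ring_hom_poly_zeta)
  note res = resultant_var_plus_const_coeffs[of "cusp_P d n" "cusp_Q n",
      folded cusp_equation_eq_resultant, unfolded degree_cusp_Q]
  show c: "coeff (cusp_equation d n) n = poly_zeta (n div 3)
      ((-1)^(degree (cusp_P d n) * n) * cusp_Q_lead n ^ degree (cusp_P d n))"
    unfolding res(2) lead_coeff_cusp_Q[unfolded degree_cusp_Q]
    by (simp add: poly_zeta.hom_mult poly_zeta.hom_power poly_zeta.hom_uminus)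
  then have "coeff (cusp_equation d n) n \<noteq> 0" by (simp add: cusp_Q_lead_nonzero)
  then show "degree (cusp_equation d n) = n" using res(1) by (simp add: le_antisym le_degree)
qed

text \<open>At this point r = w x^k and q = x^n + 1/2, so that 2 q - r^3 = 1 when n = 3 k and w^3 = 2,
  while lambda_i = 1 for i > 2 k keeps the degree of p + r^2 generic.\<close>
definition special_point :: "nat \<Rightarrow> complex \<Rightarrow> param \<Rightarrow> complex" where
  "special_point k w v = (case v of
      Lam i \<Rightarrow> if 2 * k < i then 1 else 0
    | Xi i \<Rightarrow> if i = 0 then 1 / 2 else 0
    | Zeta i \<Rightarrow> if i = k then w else 0)"

lemma comm_ring_hom_mpoly_eval_id: "comm_ring_hom (mpoly_eval id a)"
  by (rule comm_ring_hom_mpoly_eval[OF comm_ring_hom_id])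

lemma mpoly_eval_id_pvar [simp]: "mpoly_eval id a (pvar v) = a v"
  by (simp add: pvar_eq_mpoly_var comm_ring_hom_id)

lemma map_special_r_generic:
  "map_poly (mpoly_eval id (special_point (n div 3) w)) (r_generic n) = monom w (n div 3)"
proof -
  interpret eval: comm_ring_hom "mpoly_eval id (special_point (n div 3) w)"
    by (rule comm_ring_hom_mpoly_eval_id)
  show ?thesis by (rule poly_eqI) (auto simp: coeff_r_generic special_point_def coeff_monom)
qed

lemma map_special_q_generic:
  assumes "n \<ge> 1"
  shows "map_poly (mpoly_eval id (special_point k w)) (q_generic n) = monom 1 n + [:1 / 2:]"
proof -
  interpret eval: comm_ring_hom "mpoly_eval id (special_point k w)"
    by (rule comm_ring_hom_mpoly_eval_id)
  show ?thesis using assms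
    by (intro poly_eqI) (auto simp: coeff_q_generic special_point_def coeff_monom coeff_pCons split: nat.split)
qed

lemma map_special_cusp_Q:
  assumes "n \<ge> 1" "3 dvd n" "w^3 = 2"
  shows "map_poly (mpoly_eval id (special_point (n div 3) w)) (cusp_Q n) = 1"
proof -
  interpret eval: map_poly_comm_ring_hom "mpoly_eval id (special_point (n div 3) w)"
    by (rule map_poly_comm_ring_hom.intro, rule comm_ring_hom_mpoly_eval_id)
  have "map_poly (mpoly_eval id (special_point (n div 3) w)) (cusp_Q n)
      = 2 * (monom 1 n + [:1 / 2:]) - monom w (n div 3) ^ 3"
    by (simp only: cusp_Q_def eval.hom_minus eval.hom_mult eval.hom_power eval.hom_numeral
        map_special_r_generic map_special_q_generic[OF assms(1)])
  also have "monom w (n div 3) ^ 3 = monom 2 n"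
    using assms(2,3) by (simp add: monom_power mult.commute)
  also have "2 * (monom 1 n + [:1 / 2:]) - monom 2 n = (1 :: complex poly)"
    by (simp add: algebra_simps numeral_poly monom_altdef)
  finally show ?thesis .
qed

lemma special_lead_coeff_cusp_P:
  assumes "w \<noteq> 0"
  shows "mpoly_eval id (special_point (n div 3) w) (lead_coeff (cusp_P d n)) \<noteq> 0"
proof -
  let ?k = "n div 3" and ?\<psi> = "mpoly_eval id (special_point (n div 3) w)"
  define M where "M = max d (2 * ?k)"
  interpret eval: map_poly_comm_ring_hom ?\<psi>
    by (rule map_poly_comm_ring_hom.intro, rule comm_ring_hom_mpoly_eval_id)
  have "degree (r_generic n ^ 2) \<le> M"
    by (rule order.trans[OF degree_power_le]) (use degree_r_generic[of n] in \<open>auto simp: M_def\<close>)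
  then have le: "degree (cusp_P d n) \<le> M"
    using degree_p_nonconst[of d] unfolding cusp_P_def M_def by (intro degree_add_le) auto
  have P: "map_poly ?\<psi> (cusp_P d n) = map_poly ?\<psi> (p_nonconst d) + monom (w^2) (2 * ?k)"
    by (simp add: cusp_P_def eval.hom_add eval.hom_power map_special_r_generic monom_power mult.commute)
  have p: "coeff (map_poly ?\<psi> (p_nonconst d)) j = (if 1 \<le> j \<and> j \<le> d \<and> 2 * ?k < j then 1 else 0)" for j
    by (auto simp: coeff_map_poly coeff_p_nonconst special_point_def)
  have "?\<psi> (coeff (cusp_P d n) M) = coeff (map_poly ?\<psi> (cusp_P d n)) M"
    by (simp add: coeff_map_poly)
  also have "\<dots> = (if 1 \<le> M \<and> M \<le> d \<and> 2 * ?k < M then 1 else 0) + (if M = 2 * ?k then w^2 else 0)"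
    unfolding P coeff_add p coeff_monom by simp
  finally have ev: "?\<psi> (coeff (cusp_P d n) M) \<noteq> 0"
    using assms by (auto simp: M_def max_def)
  then have "M \<le> degree (cusp_P d n)" by (intro le_degree) auto
  with le ev show ?thesis by simp
qed

lemma map_special_cusp_equation_nonzero:
  assumes "n \<ge> 1" "3 dvd n" "w^3 = 2"
  shows "map_poly (mpoly_eval id (special_point (n div 3) w)) (cusp_equation d n) \<noteq> 0"
proof -
  let ?\<psi> = "mpoly_eval id (special_point (n div 3) w)"
  define P where "P = [:[:0, 1:]:] + const_coeffs (cusp_P d n)"
  interpret eval: map_poly_comm_ring_hom ?\<psi>
    by (rule map_poly_comm_ring_hom.intro, rule comm_ring_hom_mpoly_eval_id)
  have hom: "comm_ring_hom (map_poly ?\<psi>)"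
    by unfold_locales (simp_all add: eval.hom_add eval.hom_mult)
  have "map_poly (map_poly ?\<psi>) (const_coeffs (cusp_Q n)) = const_coeffs (map_poly ?\<psi> (cusp_Q n))"
    by (simp add: map_poly_map_poly o_def eval.base.map_poly_pCons_hom)
  then have Q: "map_poly (map_poly ?\<psi>) (const_coeffs (cusp_Q n)) = 1"
    by (simp add: map_special_cusp_Q[OF assms])
  have lc: "lead_coeff P = [:lead_coeff (cusp_P d n):] + (if degree (cusp_P d n) = 0 then [:0, 1:] else 0)"
    unfolding P_def by (rule lead_coeff_var_plus_const_coeffs)
  have "?\<psi> (lead_coeff (cusp_P d n)) \<noteq> 0"
    using assms(3) by (intro special_lead_coeff_cusp_P) auto
  then have "coeff (map_poly (map_poly ?\<psi>) P) (degree P) \<noteq> 0"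
    by (cases "degree (cusp_P d n) = 0")
      (simp_all add: lc coeff_map_poly eval.hom_add eval.base.map_poly_pCons_hom)
  moreover have "map_poly ?\<psi> (cusp_equation d n) = coeff (map_poly (map_poly ?\<psi>) P) (degree P) ^ n"
    unfolding cusp_equation_eq_resultant P_def[symmetric]
    using comm_ring_hom.resultant_map_poly_right_eq_1[OF hom Q] by (simp add: degree_cusp_Q)
  ultimately show ?thesis using assms(3) by simp
qed

lemma cusp_equation_coeffs_coprime:
  assumes "n \<ge> 1" and "\<forall>i. h dvd coeff (cusp_equation d n) i"
  shows "h dvd 1"
proof -
  let ?k = "n div 3" and ?m = "degree (cusp_P d n)"
  define G where "G = (-1)^(?m * n) * cusp_Q_lead n ^ ?m"
  have "G \<noteq> 0" by (simp add: G_def cusp_Q_lead_nonzero)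
  moreover have "h dvd poly_zeta ?k G"
    using assms(2) coeff_cusp_equation[of d n] unfolding G_def by metis
  ultimately consider "h dvd 1"
    | w where "poly G w = 0" "\<forall>a. a (Zeta ?k) = w \<longrightarrow> mpoly_eval id a h = 0"
    using dvd_poly_zeta_cases by blast
  then show ?thesis
  proof cases
    case (2 w)
    let ?\<psi> = "mpoly_eval id (special_point ?k w)"
    interpret eval: comm_ring_hom ?\<psi> by (rule comm_ring_hom_mpoly_eval_id)
    have "poly (cusp_Q_lead n) w = 0" using 2 by (simp add: G_def)
    then have root: "3 dvd n" "w^3 = 2"
      by (auto simp: cusp_Q_lead_def poly_monom split: if_splits)
    have "?\<psi> h = 0" using 2 by (simp add: special_point_def)
    then have "map_poly ?\<psi> (cusp_equation d n) = 0"
      using assms(2) by (intro poly_eqI) (metis coeff_map_poly coeff_0 dvd_0_left_iff eval.hom_dvd eval.hom_zero)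
    with map_special_cusp_equation_nonzero[OF assms(1) root] show ?thesis by contradiction
  qed
qed

theorem mainTheorem10:
  shows "(\<forall>p q r :: complex poly.
            cuspidal p q r \<longleftrightarrow>
              (resultant (p + r^2) (2 * q - r^3) = 0 \<or> (p + r^2 = 0 \<and> 2 * q - r^3 = 0)))
       \<and> (\<forall>d n :: nat. n \<ge> 1 \<longrightarrow>
            degree (cusp_equation d n) = n \<and>
            (\<forall>h :: mpoly. (\<forall>i. h dvd coeff (cusp_equation d n) i) \<longrightarrow> h dvd 1))"
proof (intro conjI allI impI)
  fix p q r :: "complex poly"
  show "cuspidal p q r \<longleftrightarrow>
      (resultant (p + r^2) (2 * q - r^3) = 0 \<or> (p + r^2 = 0 \<and> 2 * q - r^3 = 0))"
    unfolding cuspidal_iff_common_root common_root_iff_resultant_eq_0 ..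
next
  fix d n :: nat and h :: mpoly
  assume "n \<ge> 1"
  show "degree (cusp_equation d n) = n" by (rule degree_cusp_equation)
  assume "\<forall>i. h dvd coeff (cusp_equation d n) i"
  with \<open>n \<ge> 1\<close> show "h dvd 1" by (rule cusp_equation_coeffs_coprime)
qed

end
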